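(* Let $\mu,\nu$ be Borel probability measures on $\mathbb{R}^d$ with compact supports and $\mu\ll\mathcal{L}^d$. Let $c:\mathbb{R}^d\times\mathbb{R}^d\to\mathbb{R}^+$ be continuous and satisfy: (i) for every $x$ there is a unique $y\in\mathbb{R}^d$ with $c(x,y)=0$, and for every $y\in\mathbb{R}^d$, $\inf_{x\in\mathbb{R}^d}c(x,y)=0$; (ii) for every $y$, $c(\cdot,y)$ is strictly quasiconvex: $c((1-t)x+t\bar x,y)<\max\{c(x,y),c(\bar x,y)\}$ for all $t\in(0,1)$ and all $x\neq\bar x$; (iii) for all $\lambda>0$ and $y\in\mathbb{R}^d$, the convex set $\{z: c(z,y)\le\lambda\}$ has differentiable ($C^1$) boundary; (iv) for all $x,y,\tilde y\in\mathbb{R}^d$ and all $\lambda>0$: if $c(x,y)=c(x,\tilde y)=\lambda$ and $n_{c(\cdot,y)}(x)=n_{c(\cdot,\tilde y)}(x)$, then $y=\tilde y$. If $\gamma\in\Pi(\mu,\nu)$ is $\infty$-monotone, then $\gamma$ vanishes outside the graph of a Borel map $T:\mathbb{R}^d\to\mathbb{R}^d$ with $T_\sharp\mu=\nu$.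
   Context: $\Pi(\mu,\nu)$ is the set of Borel probability measures on $\mathbb{R}^d\times\mathbb{R}^d$ with marginals $\mu$ and $\nu$. For $y\in\mathbb{R}^d$ and $x$ with $c(x,y)=\lambda>0$, $n_{c(\cdot,y)}(x)$ denotes the unit outer normal at $x$ to the sublevel set $\{z: c(z,y)\le\lambda\}$. A set $\Gamma\subset\mathbb{R}^d\times\mathbb{R}^d$ is $\infty$-monotone if for all $(x,y),(x',y')\in\Gamma$, $\max\{c(x,y),c(x',y')\}\le\max\{c(x,y'),c(x',y)\}$; a plan $\gamma$ is $\infty$-monotone if it is concentrated on an $\infty$-monotone set. *)

theory Defs
  imports "HOL-Probability.Probability"
begin

definition measure_support :: "'a::metric_space measure \<Rightarrow> 'a set" where
  "measure_support M = {x. \<forall>e>0. emeasure M (ball x e) > 0}"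

definition transport_plans ::
  "'a::euclidean_space measure \<Rightarrow> 'a measure \<Rightarrow> ('a \<times> 'a) measure set" where
  "transport_plans \<mu> \<nu> = {\<gamma>. sets \<gamma> = sets borel \<and> prob_space \<gamma> \<and>
       distr \<gamma> borel fst = \<mu> \<and> distr \<gamma> borel snd = \<nu>}"

definition inf_monotone_set :: "('a \<Rightarrow> 'a \<Rightarrow> real) \<Rightarrow> ('a \<times> 'a) set \<Rightarrow> bool" where
  "inf_monotone_set c \<Gamma> \<longleftrightarrow>
     (\<forall>x y x' y'. (x, y) \<in> \<Gamma> \<longrightarrow> (x', y') \<in> \<Gamma> \<longrightarrow>
        max (c x y) (c x' y') \<le> max (c x y') (c x' y))"

definition inf_monotone_plan :: "('a \<Rightarrow> 'a \<Rightarrow> real) \<Rightarrow> ('a \<times> 'a) measure \<Rightarrow> bool" where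
  "inf_monotone_plan c \<gamma> \<longleftrightarrow>
     (\<exists>\<Gamma>. inf_monotone_set c \<Gamma> \<and> (\<exists>N \<in> null_sets \<gamma>. UNIV - \<Gamma> \<subseteq> N))"

definition C1_boundary :: "'a::euclidean_space set \<Rightarrow> bool" where
  "C1_boundary S \<longleftrightarrow>
     (\<forall>x \<in> frontier S. \<exists>U g G. open U \<and> x \<in> U \<and>
        (\<forall>z \<in> U. (g has_derivative (\<lambda>h. G z \<bullet> h)) (at z)) \<and>
        continuous_on U G \<and> G x \<noteq> 0 \<and>
        S \<inter> U = {z \<in> U. g z \<le> (0::real)})"

text \<open>Unit outer normal at x to a convex set S (unique when the boundary is C^1).\<close>
definition outer_normal :: "'a::euclidean_space set \<Rightarrow> 'a \<Rightarrow> 'a" where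
  "outer_normal S x = (THE v. norm v = 1 \<and> (\<forall>z \<in> S. v \<bullet> (z - x) \<le> 0))"

definition sublevel :: "('a \<Rightarrow> 'a \<Rightarrow> real) \<Rightarrow> 'a \<Rightarrow> real \<Rightarrow> 'a set" where
  "sublevel c y l = {z. c z y \<le> l}"

end

theory Submission
  imports Defs
begin

(* Let \<Gamma> be a sigma-compact infinity-monotone set carrying \<gamma>, and let x be a point coupled in \<Gamma>
   to two targets y1 \<noteq> y2.  If c(x,y2) < c(x,y1), monotonicity forbids every x' with c(x',y1) < c(x,y1)
   from being coupled to a target near y2, and such x' fill a cone at x around the inward normal of
   {c(.,y1) \<le> c(x,y1)}.  If c(x,y2) = c(x,y1), the twist condition (iv) separates the two outer normals,
   and along their bisector the cost towards y1 drops while, by strict quasiconvexity, the cost towards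
   any y' near y2 rises; again monotonicity empties a cone.  So the projection of \<Gamma> \<inter> (R^d \<times> B(y2,r))
   is porous at x.  By the Vitali covering theorem porous points of a measurable set are Lebesgue-null,
   and countably many rational balls B(q,r) suffice, so the multivalued points of \<Gamma> form a
   \<mu>-null set.  Off it \<Gamma> is the graph of a Borel map T, which then pushes \<mu> to \<nu>. *)

section \<open>Strictly quasiconvex functions\<close>

definition strictly_quasiconvex :: "('a::real_vector \<Rightarrow> real) \<Rightarrow> bool" where
  "strictly_quasiconvex f \<longleftrightarrow>
     (\<forall>x x' t. x \<noteq> x' \<longrightarrow> 0 < t \<longrightarrow> t < 1 \<longrightarrow> f ((1 - t) *\<^sub>R x + t *\<^sub>R x') < max (f x) (f x'))"

lemma strictly_quasiconvexD:
  "strictly_quasiconvex f \<Longrightarrow> x \<noteq> x' \<Longrightarrow> 0 < t \<Longrightarrow> t < 1 \<Longrightarrow>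
     f ((1 - t) *\<^sub>R x + t *\<^sub>R x') < max (f x) (f x')"
  unfolding strictly_quasiconvex_def by blast

lemma strictly_quasiconvex_sublevel_convex:
  assumes "strictly_quasiconvex f"
  shows "convex {z. f z \<le> l}"
proof (rule convexI)
  fix x y :: 'a and u v :: real
  assume x: "x \<in> {z. f z \<le> l}" and y: "y \<in> {z. f z \<le> l}" and uv: "0 \<le> u" "0 \<le> v" "u + v = 1"
  show "u *\<^sub>R x + v *\<^sub>R y \<in> {z. f z \<le> l}"
  proof (cases "x = y \<or> v = 0 \<or> v = 1")
    case True
    then show ?thesis using x y uv by (auto simp: scaleR_left_distrib[symmetric])
  next
    case False
    then have "f ((1 - v) *\<^sub>R x + v *\<^sub>R y) < max (f x) (f y)"
      using uv by (intro strictly_quasiconvexD[OF assms]) auto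
    moreover have "u = 1 - v" using uv by simp
    ultimately show ?thesis using x y by auto
  qed
qed

lemma strictly_quasiconvex_between:
  assumes "strictly_quasiconvex f" and "v \<noteq> 0" and "0 < k"
  shows "f x < max (f (x + v)) (f (x - k *\<^sub>R v))"
proof -
  define t where "t = 1 / (1 + k)"
  have t: "0 < t" "t < 1" using \<open>0 < k\<close> by (auto simp: t_def)
  have "(1 - t) *\<^sub>R (x + v) + t *\<^sub>R (x - k *\<^sub>R v) = x + ((1 - t) - t * k) *\<^sub>R v"
    by (simp add: algebra_simps)
  also have "(1 - t) - t * k = 0" using \<open>0 < k\<close> by (simp add: t_def field_simps)
  finally have "x = (1 - t) *\<^sub>R (x + v) + t *\<^sub>R (x - k *\<^sub>R v)" by simp
  moreover have "x + v \<noteq> x - k *\<^sub>R v"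
  proof
    assume "x + v = x - k *\<^sub>R v"
    then have "(1 + k) *\<^sub>R v = 0" by (simp add: algebra_simps)
    then show False using assms(2,3) by simp
  qed
  ultimately show ?thesis using strictly_quasiconvexD[OF assms(1) _ t] by metis
qed

lemma strictly_quasiconvex_level_not_interior:
  fixes f :: "'a::real_normed_vector \<Rightarrow> real"
  assumes "strictly_quasiconvex f" and "f w < l" and "f x = l"
  shows "x \<notin> interior {z. f z \<le> l}"
proof
  assume "x \<in> interior {z. f z \<le> l}"
  then obtain e where "e > 0" and e: "ball x e \<subseteq> {z. f z \<le> l}"
    by (meson mem_interior)
  have "w \<noteq> x" using assms by auto
  define t where "t = e / (2 * norm (x - w))"
  have t: "t > 0" using \<open>e > 0\<close> \<open>w \<noteq> x\<close> by (simp add: t_def)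
  have "norm (t *\<^sub>R (x - w)) = e / 2" using \<open>w \<noteq> x\<close> \<open>e > 0\<close> by (simp add: t_def)
  then have "f (x + t *\<^sub>R (x - w)) \<le> l"
    using e \<open>e > 0\<close> by (auto simp: dist_norm subset_iff)
  moreover have "f x < max (f (x + t *\<^sub>R (x - w))) (f (x - (1 / t) *\<^sub>R (t *\<^sub>R (x - w))))"
    using t \<open>w \<noteq> x\<close> by (intro strictly_quasiconvex_between[OF assms(1)]) auto
  moreover have "x - (1 / t) *\<^sub>R (t *\<^sub>R (x - w)) = w" using t by simp
  ultimately show False using assms(2,3) by simp
qed

lemma unit_vector_eq_of_halfspace:
  fixes n v :: "'a::real_inner"
  assumes "norm n = 1" and "norm v = 1" and halfspace: "\<And>h. n \<bullet> h < 0 \<Longrightarrow> v \<bullet> h \<le> 0"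
  shows "v = n"
proof -
  have closed_halfspace: "v \<bullet> h \<le> 0" if "n \<bullet> h \<le> 0" for h
  proof (rule field_le_epsilon)
    fix e :: real assume "e > 0"
    have "n \<bullet> (h - e *\<^sub>R n) < 0"
      using that \<open>e > 0\<close> assms(1) by (simp add: inner_diff_right dot_square_norm)
    then have "v \<bullet> (h - e *\<^sub>R n) \<le> 0" by (rule halfspace)
    then have "v \<bullet> h \<le> e * (v \<bullet> n)" by (simp add: inner_diff_right)
    moreover have "e * (v \<bullet> n) \<le> e"
      using norm_cauchy_schwarz[of v n] assms \<open>e > 0\<close> by (simp add: mult_left_le)
    ultimately show "v \<bullet> h \<le> 0 + e" by simp
  qed
  have "n \<bullet> (v - n) \<le> 0"
    using norm_cauchy_schwarz[of n v] assms by (simp add: inner_diff_right dot_square_norm)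
  then have "v \<bullet> (v - n) \<le> 0" by (rule closed_halfspace)
  have "v \<bullet> v = 1" "n \<bullet> n = 1" using assms by (simp_all add: dot_square_norm)
  then have "(norm (v - n))\<^sup>2 = 2 * (v \<bullet> (v - n))"
    by (simp add: power2_norm_eq_inner inner_diff_left inner_diff_right inner_commute)
  also have "\<dots> \<le> 0" using \<open>v \<bullet> (v - n) \<le> 0\<close> by simp
  finally show "v = n" by simp
qed

section \<open>Outer normals of convex sets with \<open>C\<^sup>1\<close> boundary\<close>

lemma C1_boundary_local_chart:
  fixes S :: "'a::euclidean_space set"
  assumes "C1_boundary S" and "closed S" and "x \<in> frontier S"
  obtains g :: "'a \<Rightarrow> real" and G r where "0 < r" and "G \<noteq> 0" and "g x = 0"
    and "(g has_derivative (\<lambda>h. G \<bullet> h)) (at x)"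
    and "\<And>z. dist z x < r \<Longrightarrow> z \<in> S \<longleftrightarrow> g z \<le> 0"
proof -
  obtain U g Gf where "open U" "x \<in> U" and der: "\<forall>z\<in>U. (g has_derivative (\<lambda>h. Gf z \<bullet> h)) (at z)"
    and "Gf x \<noteq> 0" and SU: "S \<inter> U = {z \<in> U. g z \<le> 0}"
    using bspec[OF assms(1)[unfolded C1_boundary_def] assms(3)] by metis
  obtain r where "0 < r" and "ball x r \<subseteq> U" using \<open>open U\<close> \<open>x \<in> U\<close> by (meson openE)
  have chart: "z \<in> S \<longleftrightarrow> g z \<le> 0" if "dist z x < r" for z
  proof -
    have "z \<in> U" using that \<open>ball x r \<subseteq> U\<close> by (metis dist_commute mem_ball subsetD)
    then show ?thesis using SU by blast
  qed
  have derx: "(g has_derivative (\<lambda>h. Gf x \<bullet> h)) (at x)" using der \<open>x \<in> U\<close> by blast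
  have "x \<in> S" using assms(2,3) by (simp add: frontier_def)
  then have "g x \<le> 0" using chart \<open>0 < r\<close> by simp
  moreover have "\<not> g x < 0"
  proof
    assume "g x < 0"
    have "continuous (at x) g" using derx by (rule has_derivative_continuous)
    then obtain d where "0 < d" and d: "\<forall>z. dist z x < d \<longrightarrow> dist (g z) (g x) < - g x"
      using \<open>g x < 0\<close> unfolding continuous_at_eps_delta by (meson neg_0_less_iff_less)
    have "ball x (min d r) \<subseteq> S"
    proof
      fix z assume "z \<in> ball x (min d r)"
      then have "dist z x < d" "dist z x < r" by (simp_all add: dist_commute)
      then show "z \<in> S" using d chart by (auto simp: dist_real_def)
    qed
    then have "ball x (min d r) \<subseteq> interior S" by (rule interior_maximal) simp
    then have "x \<in> interior S" using \<open>0 < d\<close> \<open>0 < r\<close> by auto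
    then show False using assms(3) by (simp add: frontier_def)
  qed
  ultimately have "g x = 0" by simp
  with that[OF \<open>0 < r\<close> \<open>Gf x \<noteq> 0\<close> _ derx chart] show thesis by blast
qed

lemma has_derivative_inner_cone_sign:
  fixes g :: "'a::real_inner \<Rightarrow> real"
  assumes "(g has_derivative (\<lambda>h. G \<bullet> h)) (at x)" and "g x = 0" and "0 < \<alpha>"
  shows "\<exists>r>0. \<forall>v. 0 < norm v \<longrightarrow> norm v < r \<longrightarrow>
           (G \<bullet> v \<le> - \<alpha> * norm v \<longrightarrow> g (x + v) < 0) \<and> (\<alpha> * norm v \<le> G \<bullet> v \<longrightarrow> 0 < g (x + v))"
proof -
  have "0 < \<alpha> / 2" using assms(3) by simp
  then have "\<exists>r>0. \<forall>y. norm (y - x) < r \<longrightarrow> norm (g y - g x - G \<bullet> (y - x)) \<le> \<alpha> / 2 * norm (y - x)"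
    using assms(1) unfolding has_derivative_at_alt by blast
  then obtain r where "0 < r" and r: "\<And>v. norm v < r \<Longrightarrow> \<bar>g (x + v) - G \<bullet> v\<bar> \<le> \<alpha> / 2 * norm v"
    using assms(2) by (metis add_diff_cancel_left' real_norm_def diff_zero)
  have "(G \<bullet> v \<le> - \<alpha> * norm v \<longrightarrow> g (x + v) < 0) \<and> (\<alpha> * norm v \<le> G \<bullet> v \<longrightarrow> 0 < g (x + v))"
    if "0 < norm v" "norm v < r" for v
  proof -
    have "0 < \<alpha> * norm v" using that(1) assms(3) by simp
    then show ?thesis using abs_le_D1[OF r[OF that(2)]] abs_le_D2[OF r[OF that(2)]] by linarith
  qed
  then show ?thesis using \<open>0 < r\<close> by blast
qed

lemma chart_inward_cone:
  fixes g :: "'a::real_inner \<Rightarrow> real"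
  assumes der: "(g has_derivative (\<lambda>h. G \<bullet> h)) (at x)" and "g x = 0" and "G \<noteq> 0"
    and chart: "\<And>z. dist z x < r \<Longrightarrow> z \<in> S \<longleftrightarrow> g z \<le> 0" and "0 < r" and "0 < \<alpha>"
  shows "\<exists>r>0. \<forall>v. 0 < norm v \<longrightarrow> norm v < r \<longrightarrow> sgn G \<bullet> v \<le> - \<alpha> * norm v \<longrightarrow> x + v \<in> S"
proof -
  have "0 < \<alpha> * norm G" using \<open>0 < \<alpha>\<close> \<open>G \<noteq> 0\<close> by simp
  from has_derivative_inner_cone_sign[OF der \<open>g x = 0\<close> this]
  obtain r1 where "0 < r1" and neg: "\<forall>v. 0 < norm v \<longrightarrow> norm v < r1 \<longrightarrow>
      G \<bullet> v \<le> - (\<alpha> * norm G) * norm v \<longrightarrow> g (x + v) < 0"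
    by blast
  have "x + v \<in> S" if "0 < norm v" "norm v < min r r1" "sgn G \<bullet> v \<le> - \<alpha> * norm v" for v
  proof -
    have "norm G * (sgn G \<bullet> v) \<le> norm G * (- \<alpha> * norm v)"
      using that(3) by (rule mult_left_mono) simp
    moreover have "G \<bullet> v = norm G * (sgn G \<bullet> v)" using \<open>G \<noteq> 0\<close> by (simp add: sgn_div_norm)
    ultimately have "G \<bullet> v \<le> - (\<alpha> * norm G) * norm v" by (simp add: mult_ac)
    then have "g (x + v) < 0" using neg that by auto
    then show ?thesis using chart[of "x + v"] that by (simp add: dist_norm)
  qed
  then show ?thesis using \<open>0 < r\<close> \<open>0 < r1\<close> by (intro exI[of _ "min r r1"]) auto
qed

lemma convex_chart_supporting:
  fixes g :: "'a::real_inner \<Rightarrow> real"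
  assumes "convex S" and "x \<in> S" and "z \<in> S"
    and der: "(g has_derivative (\<lambda>h. G \<bullet> h)) (at x)" and "g x = 0" and "G \<noteq> 0"
    and chart: "\<And>z. dist z x < r \<Longrightarrow> z \<in> S \<longleftrightarrow> g z \<le> 0" and "0 < r"
  shows "sgn G \<bullet> (z - x) \<le> 0"
proof (rule ccontr)
  define h where "h = z - x"
  assume "\<not> sgn G \<bullet> (z - x) \<le> 0"
  moreover have "sgn G \<bullet> (z - x) = G \<bullet> h / norm G" by (simp add: h_def sgn_div_norm divide_inverse_commute)
  ultimately have "0 < G \<bullet> h" using divide_nonpos_nonneg[of "G \<bullet> h" "norm G"] by force
  then have "h \<noteq> 0" by auto
  define \<alpha> where "\<alpha> = G \<bullet> h / norm h"
  have "0 < \<alpha>" using \<open>0 < G \<bullet> h\<close> \<open>h \<noteq> 0\<close> by (simp add: \<alpha>_def)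
  from has_derivative_inner_cone_sign[OF der \<open>g x = 0\<close> this]
  obtain r1 where "0 < r1" and pos: "\<forall>v. 0 < norm v \<longrightarrow> norm v < r1 \<longrightarrow>
      \<alpha> * norm v \<le> G \<bullet> v \<longrightarrow> 0 < g (x + v)"
    by blast
  define t where "t = min 1 (min r r1 / (2 * norm h))"
  have t: "0 < t" "t \<le> 1" using \<open>h \<noteq> 0\<close> \<open>0 < r\<close> \<open>0 < r1\<close> by (auto simp: t_def)
  have "t \<le> min r r1 / (2 * norm h)" by (simp add: t_def)
  then have "t * norm h \<le> min r r1 / 2" using \<open>h \<noteq> 0\<close> by (simp add: pos_le_divide_eq)
  then have "norm (t *\<^sub>R h) < r" "norm (t *\<^sub>R h) < r1" using \<open>0 < r\<close> \<open>0 < r1\<close> t by auto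
  have "x + t *\<^sub>R h = (1 - t) *\<^sub>R x + t *\<^sub>R z" by (simp add: h_def algebra_simps)
  then have "x + t *\<^sub>R h \<in> S" using convexD[OF assms(1,2,3), of "1 - t" t] t by simp
  then have "g (x + t *\<^sub>R h) \<le> 0" using chart \<open>norm (t *\<^sub>R h) < r\<close> by (simp add: dist_norm)
  moreover have "\<alpha> * norm (t *\<^sub>R h) = G \<bullet> (t *\<^sub>R h)" using \<open>h \<noteq> 0\<close> t by (simp add: \<alpha>_def)
  moreover have "0 < norm (t *\<^sub>R h)" using \<open>h \<noteq> 0\<close> t by simp
  ultimately show False using pos \<open>norm (t *\<^sub>R h) < r1\<close> by fastforce
qed

lemma supporting_unit_vector_eq_inward_normal:
  fixes n v :: "'a::real_inner"
  assumes "norm n = 1" and "norm v = 1" and supporting: "\<forall>z\<in>S. v \<bullet> (z - x) \<le> 0"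
    and cone: "\<And>\<alpha>. 0 < \<alpha> \<Longrightarrow>
      \<exists>r>0. \<forall>w. 0 < norm w \<longrightarrow> norm w < r \<longrightarrow> n \<bullet> w \<le> - \<alpha> * norm w \<longrightarrow> x + w \<in> S"
  shows "v = n"
proof (rule unit_vector_eq_of_halfspace[OF assms(1,2)])
  fix h assume "n \<bullet> h < 0"
  then have "h \<noteq> 0" by auto
  define \<beta> where "\<beta> = - (n \<bullet> h) / norm h"
  have "0 < \<beta>" using \<open>n \<bullet> h < 0\<close> \<open>h \<noteq> 0\<close> by (simp add: \<beta>_def divide_neg_pos)
  from cone[OF this] obtain r where "0 < r"
    and r: "\<forall>w. 0 < norm w \<longrightarrow> norm w < r \<longrightarrow> n \<bullet> w \<le> - \<beta> * norm w \<longrightarrow> x + w \<in> S"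
    by blast
  define t where "t = r / (2 * norm h)"
  have "0 < t" "t * norm h < r" using \<open>0 < r\<close> \<open>h \<noteq> 0\<close> by (auto simp: t_def)
  moreover have "n \<bullet> (t *\<^sub>R h) = - \<beta> * norm (t *\<^sub>R h)"
    using \<open>h \<noteq> 0\<close> \<open>0 < t\<close> by (simp add: \<beta>_def)
  ultimately have "x + t *\<^sub>R h \<in> S" using r \<open>h \<noteq> 0\<close> by simp
  then have "v \<bullet> (t *\<^sub>R h) \<le> 0" using supporting by force
  then show "v \<bullet> h \<le> 0" using \<open>0 < t\<close> by (simp add: mult_le_0_iff)
qed

lemma C1_boundary_outer_normal:
  fixes S :: "'a::euclidean_space set"
  assumes "convex S" and "closed S" and "C1_boundary S" and "x \<in> frontier S"
  shows "norm (outer_normal S x) = 1"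
    and "0 < \<alpha> \<Longrightarrow> \<exists>r>0. \<forall>v. 0 < norm v \<longrightarrow> norm v < r \<longrightarrow>
           outer_normal S x \<bullet> v \<le> - \<alpha> * norm v \<longrightarrow> x + v \<in> S"
proof -
  obtain g :: "'a \<Rightarrow> real" and G r where "0 < r" and "G \<noteq> 0" and "g x = 0"
    and der: "(g has_derivative (\<lambda>h. G \<bullet> h)) (at x)"
    and chart: "\<And>z. dist z x < r \<Longrightarrow> z \<in> S \<longleftrightarrow> g z \<le> 0"
    using C1_boundary_local_chart[OF assms(3,2,4)] by metis
  have "x \<in> S" using assms(2,4) by (simp add: frontier_def)
  note cone = chart_inward_cone[OF der \<open>g x = 0\<close> \<open>G \<noteq> 0\<close> chart \<open>0 < r\<close>]
  have "outer_normal S x = sgn G"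
    unfolding outer_normal_def
  proof (rule the_equality)
    show "norm (sgn G) = 1 \<and> (\<forall>z\<in>S. sgn G \<bullet> (z - x) \<le> 0)"
      using convex_chart_supporting[OF assms(1) \<open>x \<in> S\<close> _ der \<open>g x = 0\<close> \<open>G \<noteq> 0\<close> chart \<open>0 < r\<close>]
        \<open>G \<noteq> 0\<close> by (simp add: norm_sgn)
    show "v = sgn G" if "norm v = 1 \<and> (\<forall>z\<in>S. v \<bullet> (z - x) \<le> 0)" for v
      using supporting_unit_vector_eq_inward_normal[of "sgn G" v S x] that cone \<open>G \<noteq> 0\<close>
      by (simp add: norm_sgn)
  qed
  then show "norm (outer_normal S x) = 1" using \<open>G \<noteq> 0\<close> by (simp add: norm_sgn)
  show "0 < \<alpha> \<Longrightarrow> \<exists>r>0. \<forall>v. 0 < norm v \<longrightarrow> norm v < r \<longrightarrow>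
           outer_normal S x \<bullet> v \<le> - \<alpha> * norm v \<longrightarrow> x + v \<in> S"
    using cone \<open>outer_normal S x = sgn G\<close> by simp
qed

lemma strictly_quasiconvex_sublevel_outer_normal:
  fixes f :: "'a::euclidean_space \<Rightarrow> real"
  assumes qc: "strictly_quasiconvex f" and "continuous_on UNIV f"
    and "C1_boundary {z. f z \<le> l}" and "f w < l" and "f x = l"
  shows "norm (outer_normal {z. f z \<le> l} x) = 1"
    and "0 < \<alpha> \<Longrightarrow> \<exists>r>0. \<forall>v. 0 < norm v \<longrightarrow> norm v < r \<longrightarrow>
           outer_normal {z. f z \<le> l} x \<bullet> v \<le> - \<alpha> * norm v \<longrightarrow> f (x + v) < l"
proof -
  define S where "S = {z. f z \<le> l}"
  have "closed S" unfolding S_def by (rule closed_Collect_le[OF assms(2) continuous_on_const])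
  have "x \<in> S - interior S"
    using strictly_quasiconvex_level_not_interior[OF qc assms(4,5)] assms(5) by (simp add: S_def)
  then have "x \<in> frontier S" using \<open>closed S\<close> by (simp add: frontier_def)
  note normal = C1_boundary_outer_normal[OF strictly_quasiconvex_sublevel_convex[OF qc]
      \<open>closed S\<close>[unfolded S_def] assms(3) \<open>x \<in> frontier S\<close>[unfolded S_def]]
  show "norm (outer_normal {z. f z \<le> l} x) = 1" by (rule normal(1))
  assume "0 < \<alpha>"
  then obtain r where "0 < r" and r: "\<forall>v. 0 < norm v \<longrightarrow> norm v < r \<longrightarrow>
      outer_normal {z. f z \<le> l} x \<bullet> v \<le> - \<alpha> * norm v \<longrightarrow> f (x + v) \<le> l"
    using normal(2) by auto
  have "f (x + v) < l"
    if "0 < norm v" "norm v < r / 2" "outer_normal {z. f z \<le> l} x \<bullet> v \<le> - \<alpha> * norm v" for v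
  proof -
    have "f (x + 2 *\<^sub>R v) \<le> l" using r[rule_format, of "2 *\<^sub>R v"] that by (simp add: inner_scaleR_right)
    moreover have "f (x + v) < max (f (x + v + v)) (f (x + v - 1 *\<^sub>R v))"
      using that(1) by (intro strictly_quasiconvex_between[OF qc]) auto
    ultimately show ?thesis using assms(5) by (simp add: scaleR_2 add.assoc)
  qed
  then show "\<exists>r>0. \<forall>v. 0 < norm v \<longrightarrow> norm v < r \<longrightarrow>
      outer_normal {z. f z \<le> l} x \<bullet> v \<le> - \<alpha> * norm v \<longrightarrow> f (x + v) < l"
    using \<open>0 < r\<close> by (intro exI[of _ "r / 2"]) auto
qed

section \<open>Porosity\<close>

definition porous_at :: "real \<Rightarrow> 'a::metric_space set \<Rightarrow> 'a \<Rightarrow> bool" where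
  "porous_at s E x \<longleftrightarrow>
     (\<forall>\<rho>0>0. \<exists>\<rho>. 0 < \<rho> \<and> \<rho> < \<rho>0 \<and> (\<exists>z. ball z (s * \<rho>) \<subseteq> ball x \<rho> \<and> ball z (s * \<rho>) \<inter> E = {}))"

lemma porous_at_mono:
  assumes "porous_at s E x" and "s' \<le> s" and "E' \<subseteq> E"
  shows "porous_at s' E' x"
  unfolding porous_at_def
proof (intro allI impI)
  fix \<rho>0 :: real assume "0 < \<rho>0"
  then obtain \<rho> z where "0 < \<rho>" "\<rho> < \<rho>0" "ball z (s * \<rho>) \<subseteq> ball x \<rho>" "ball z (s * \<rho>) \<inter> E = {}"
    using assms(1) unfolding porous_at_def by blast
  moreover have "ball z (s' * \<rho>) \<subseteq> ball z (s * \<rho>)"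
    using \<open>0 < \<rho>\<close> assms(2) by (intro subset_ball mult_right_mono) auto
  ultimately show "\<exists>\<rho>. 0 < \<rho> \<and> \<rho> < \<rho>0 \<and> (\<exists>z. ball z (s' * \<rho>) \<subseteq> ball x \<rho> \<and> ball z (s' * \<rho>) \<inter> E' = {})"
    using assms(3) by blast
qed

lemma porous_at_ray:
  fixes u :: "'a::real_normed_vector"
  assumes "norm u = 1" and "s \<le> 1 / 2" and "0 < \<rho>1"
    and avoid: "\<And>\<rho>. 0 < \<rho> \<Longrightarrow> \<rho> < \<rho>1 \<Longrightarrow> ball (x + (\<rho> / 2) *\<^sub>R u) (s * \<rho>) \<inter> E = {}"
  shows "porous_at s E x"
  unfolding porous_at_def
proof (intro allI impI)
  fix \<rho>0 :: real assume "0 < \<rho>0"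
  define \<rho> where "\<rho> = min \<rho>0 \<rho>1 / 2"
  have \<rho>: "0 < \<rho>" "\<rho> < \<rho>0" "\<rho> < \<rho>1" using \<open>0 < \<rho>0\<close> \<open>0 < \<rho>1\<close> by (auto simp: \<rho>_def)
  have "ball (x + (\<rho> / 2) *\<^sub>R u) (s * \<rho>) \<subseteq> ball x \<rho>"
  proof
    fix y assume "y \<in> ball (x + (\<rho> / 2) *\<^sub>R u) (s * \<rho>)"
    moreover have "dist x (x + (\<rho> / 2) *\<^sub>R u) = \<rho> / 2" using assms(1) \<rho>(1) by (simp add: dist_norm)
    moreover have "s * \<rho> \<le> \<rho> / 2" using assms(2) \<rho>(1) by simp
    ultimately show "y \<in> ball x \<rho>" using dist_triangle[of x y "x + (\<rho> / 2) *\<^sub>R u"] by simp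
  qed
  then show "\<exists>\<rho>. 0 < \<rho> \<and> \<rho> < \<rho>0 \<and> (\<exists>z. ball z (s * \<rho>) \<subseteq> ball x \<rho> \<and> ball z (s * \<rho>) \<inter> E = {})"
    using \<rho> avoid by blast
qed

lemma measure_ball_scaled:
  fixes x z :: "'a::euclidean_space"
  assumes "0 \<le> s" and "0 \<le> r"
  shows "measure lebesgue (ball z (s * r)) = s ^ DIM('a) * measure lebesgue (ball x r)"
  using content_ball_conv_unit_ball[of "s * r" z] content_ball_conv_unit_ball[of r x] assms
  by (simp add: power_mult_distrib)

lemma disjoint_holed_balls_measure_le:
  fixes W :: "'a::euclidean_space set"
  assumes "countable C" and "W \<in> lmeasurable" and "0 < s"
    and disj: "pairwise (\<lambda>i j. disjnt (ball (a i) (r i)) (ball (a j) (r j))) C"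
    and hole: "\<And>i. i \<in> C \<Longrightarrow> 0 < r i \<and> ball (b i) (s * r i) \<subseteq> ball (a i) (r i) \<inter> W"
  shows "(\<Union>i\<in>C. ball (a i) (r i)) \<in> lmeasurable"
    and "measure lebesgue (\<Union>i\<in>C. ball (a i) (r i)) \<le> measure lebesgue W / s ^ DIM('a)"
proof -
  define \<theta> where "\<theta> = s ^ DIM('a)"
  have "0 < \<theta>" using \<open>0 < s\<close> by (simp add: \<theta>_def)
  have bound: "measure lebesgue (\<Union>i\<in>I. ball (a i) (r i)) \<le> measure lebesgue W / s ^ DIM('a)"
    if "I \<subseteq> C" "finite I" for I
  proof -
    have disjI: "pairwise (\<lambda>i j. disjnt (ball (a i) (r i)) (ball (a j) (r j))) I"
      using pairwise_subset[OF disj \<open>I \<subseteq> C\<close>] .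
    then have "pairwise (\<lambda>i j. disjnt (ball (b i) (s * r i)) (ball (b j) (s * r j))) I"
      using hole \<open>I \<subseteq> C\<close> unfolding pairwise_def by (meson disjnt_subset1 disjnt_subset2 le_inf_iff subsetD)
    then have "(\<Sum>i\<in>I. measure lebesgue (ball (b i) (s * r i))) = measure lebesgue (\<Union>i\<in>I. ball (b i) (s * r i))"
      using \<open>finite I\<close> by (intro measure_UNION'[symmetric]) auto
    also have "\<dots> \<le> measure lebesgue W"
      using hole \<open>I \<subseteq> C\<close> \<open>finite I\<close> assms(2)
      by (intro measure_mono_fmeasurable) (auto intro: fmeasurableD)
    finally have holes: "(\<Sum>i\<in>I. measure lebesgue (ball (b i) (s * r i))) \<le> measure lebesgue W" .
    have "measure lebesgue (\<Union>i\<in>I. ball (a i) (r i)) = (\<Sum>i\<in>I. measure lebesgue (ball (a i) (r i)))"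
      using \<open>finite I\<close> disjI by (intro measure_UNION') auto
    also have "\<dots> = (\<Sum>i\<in>I. measure lebesgue (ball (b i) (s * r i)) / \<theta>)"
    proof (rule sum.cong[OF refl])
      fix i assume "i \<in> I"
      then have "0 < r i" using hole \<open>I \<subseteq> C\<close> by blast
      then show "measure lebesgue (ball (a i) (r i)) = measure lebesgue (ball (b i) (s * r i)) / \<theta>"
        using measure_ball_scaled[of s "r i" "b i" "a i"] \<open>0 < s\<close> \<open>0 < \<theta>\<close> by (simp add: \<theta>_def)
    qed
    also have "\<dots> = (\<Sum>i\<in>I. measure lebesgue (ball (b i) (s * r i))) / \<theta>"
      by (simp add: sum_divide_distrib)
    also have "\<dots> \<le> measure lebesgue W / \<theta>"
      using holes \<open>0 < \<theta>\<close> by (simp add: divide_right_mono)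
    finally show ?thesis by (simp add: \<theta>_def)
  qed
  show "(\<Union>i\<in>C. ball (a i) (r i)) \<in> lmeasurable"
    by (rule fmeasurable_UN_bound[OF \<open>countable C\<close> _ bound]) auto
  show "measure lebesgue (\<Union>i\<in>C. ball (a i) (r i)) \<le> measure lebesgue W / s ^ DIM('a)"
    by (rule measure_UN_bound[OF \<open>countable C\<close> _ bound]) auto
qed

lemma porous_points_cover_measure_le:
  fixes E :: "'a::euclidean_space set"
  assumes "open U" and "E \<subseteq> U" and "U - E \<in> lmeasurable" and "0 < s"
  obtains T where "{x \<in> E. porous_at s E x} \<subseteq> T" and "T \<in> lmeasurable"
    and "measure lebesgue T \<le> measure lebesgue (U - E) / s ^ DIM('a)"
proof -
  define S where "S = {x \<in> E. porous_at s E x}"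
  define K where "K = {(x, \<rho>). x \<in> S \<and> 0 < \<rho> \<and> (\<exists>z. ball z (s * \<rho>) \<subseteq> ball x \<rho> \<inter> (U - E))}"
  have cover: "\<exists>i. i \<in> K \<and> x \<in> ball (fst i) (snd i) \<and> snd i < d" if "x \<in> S" "0 < d" for x d
  proof -
    have "x \<in> U" using that(1) \<open>E \<subseteq> U\<close> by (auto simp: S_def)
    then obtain r where "0 < r" "ball x r \<subseteq> U" by (rule openE[OF \<open>open U\<close>])
    have "porous_at s E x" using that(1) by (simp add: S_def)
    moreover have "0 < min d r" using \<open>0 < d\<close> \<open>0 < r\<close> by simp
    ultimately obtain \<rho> z where "0 < \<rho>" "\<rho> < min d r"
      and "ball z (s * \<rho>) \<subseteq> ball x \<rho>" "ball z (s * \<rho>) \<inter> E = {}"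
      unfolding porous_at_def by blast
    moreover have "ball x \<rho> \<subseteq> U" using \<open>\<rho> < min d r\<close> \<open>ball x r \<subseteq> U\<close> by auto
    ultimately have "(x, \<rho>) \<in> K" using \<open>x \<in> S\<close> by (auto simp: K_def)
    then show ?thesis using \<open>0 < \<rho>\<close> \<open>\<rho> < min d r\<close> by force
  qed
  obtain C where "countable C" "C \<subseteq> K"
    and disj: "pairwise (\<lambda>i j. disjnt (ball (fst i) (snd i)) (ball (fst j) (snd j))) C"
    and rest: "negligible (S - (\<Union>i\<in>C. ball (fst i) (snd i)))"
    using Vitali_covering_theorem_balls[of S K fst snd, OF cover] by blast
  have "\<forall>i\<in>C. \<exists>z. 0 < snd i \<and> ball z (s * snd i) \<subseteq> ball (fst i) (snd i) \<inter> (U - E)"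
    using \<open>C \<subseteq> K\<close> by (auto simp: K_def)
  then obtain b where "\<forall>i\<in>C. 0 < snd i \<and> ball (b i) (s * snd i) \<subseteq> ball (fst i) (snd i) \<inter> (U - E)"
    by (rule bchoice[THEN exE])
  \<comment> \<open>each Vitali ball contains a hole of proportional volume inside \<open>U - E\<close>\<close>
  note covered = disjoint_holed_balls_measure_le[OF \<open>countable C\<close> \<open>U - E \<in> lmeasurable\<close> \<open>0 < s\<close>
      disj this[rule_format]]
  define T where "T = (S - (\<Union>i\<in>C. ball (fst i) (snd i))) \<union> (\<Union>i\<in>C. ball (fst i) (snd i))"
  have "S \<subseteq> T" by (auto simp: T_def)
  moreover have "T \<in> lmeasurable"
    unfolding T_def using negligible_imp_measurable[OF rest] covered(1) by (rule fmeasurable.Un)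
  moreover have "measure lebesgue T \<le> measure lebesgue (U - E) / s ^ DIM('a)"
  proof -
    have "measure lebesgue T \<le> measure lebesgue (S - (\<Union>i\<in>C. ball (fst i) (snd i)))
        + measure lebesgue (\<Union>i\<in>C. ball (fst i) (snd i))"
      unfolding T_def by (intro measure_Un_le fmeasurableD negligible_imp_measurable[OF rest] covered(1))
    then show ?thesis using covered(2) by (simp add: negligible_imp_measure0[OF rest])
  qed
  ultimately show thesis using that by (simp add: S_def)
qed

lemma negligible_porous_points:
  fixes E :: "'a::euclidean_space set"
  assumes "E \<in> sets lebesgue" and "0 < s"
  shows "negligible {x \<in> E. porous_at s E x}"
  unfolding negligible_outer_le
proof (intro allI impI)
  fix e :: real assume "0 < e"
  then have "0 < e * s ^ DIM('a)" using \<open>0 < s\<close> by simp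
  then obtain U where "open U" "E \<subseteq> U" "U - E \<in> lmeasurable"
    and small: "emeasure lebesgue (U - E) < ennreal (e * s ^ DIM('a))"
    using sets_lebesgue_outer_open[OF assms(1)] by metis
  have "measure lebesgue (U - E) / s ^ DIM('a) \<le> e"
    using small emeasure_eq_measure2[OF \<open>U - E \<in> lmeasurable\<close>] \<open>0 < s\<close>
    by (simp add: ennreal_less_iff divide_le_eq)
  moreover obtain T where "{x \<in> E. porous_at s E x} \<subseteq> T" and "T \<in> lmeasurable"
    and "measure lebesgue T \<le> measure lebesgue (U - E) / s ^ DIM('a)"
    by (rule porous_points_cover_measure_le[OF \<open>open U\<close> \<open>E \<subseteq> U\<close> \<open>U - E \<in> lmeasurable\<close> \<open>0 < s\<close>])
  ultimately show "\<exists>T. {x \<in> E. porous_at s E x} \<subseteq> T \<and> T \<in> lmeasurable \<and> measure lebesgue T \<le> e"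
    by (intro exI[of _ T]) auto
qed

section \<open>Infinity-monotone sets are graphs almost everywhere\<close>

lemma ball_along_ray_in_cone:
  fixes n u :: "'a::real_inner"
  assumes "norm n = 1" and "norm u = 1" and "0 < a" and "a \<le> n \<bullet> u" and "0 < \<rho>"
    and "x' \<in> ball (x + (\<rho> / 2) *\<^sub>R u) (a / 4 * \<rho>)"
  shows "0 < norm (x' - x)" and "norm (x' - x) < \<rho>" and "a / 4 * norm (x' - x) \<le> n \<bullet> (x' - x)"
proof -
  define w where "w = x' - (x + (\<rho> / 2) *\<^sub>R u)"
  have "norm w < a / 4 * \<rho>" using assms(6) by (simp add: w_def dist_norm norm_minus_commute)
  have decomp: "x' - x = (\<rho> / 2) *\<^sub>R u + w" by (simp add: w_def)
  have "a \<le> 1" using Cauchy_Schwarz_ineq2[of n u] assms(1,2,4) by simp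
  then have "a / 4 * \<rho> \<le> \<rho> / 4" using assms(5) by simp
  moreover have "norm (x' - x) \<le> \<rho> / 2 + norm w"
    using norm_triangle_ineq[of "(\<rho> / 2) *\<^sub>R u" w] assms(2,5) by (simp add: decomp)
  ultimately show "norm (x' - x) < \<rho>" using \<open>norm w < a / 4 * \<rho>\<close> assms(5) by linarith
  have "- norm w \<le> n \<bullet> w" using Cauchy_Schwarz_ineq2[of n w] assms(1) by simp
  moreover have "\<rho> / 2 * a \<le> \<rho> / 2 * (n \<bullet> u)" using assms(4,5) by simp
  moreover have "\<rho> / 2 * a = 2 * (a / 4 * \<rho>)" by simp
  moreover have "n \<bullet> (x' - x) = \<rho> / 2 * (n \<bullet> u) + n \<bullet> w" by (simp add: decomp inner_add_right)
  ultimately have "a / 4 * \<rho> < n \<bullet> (x' - x)" using \<open>norm w < a / 4 * \<rho>\<close> by linarith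
  moreover have "a / 4 * norm (x' - x) \<le> a / 4 * \<rho>"
    using \<open>norm (x' - x) < \<rho>\<close> assms(3) by simp
  ultimately show "a / 4 * norm (x' - x) \<le> n \<bullet> (x' - x)" by linarith
  have "0 < a / 4 * \<rho>" using assms(3,5) by simp
  then show "0 < norm (x' - x)" using \<open>a / 4 * \<rho> < n \<bullet> (x' - x)\<close> by (auto simp del: diff_eq_eq)
qed

lemma unit_vectors_bisector:
  fixes n1 n2 :: "'a::real_inner"
  assumes "norm n1 = 1" and "norm n2 = 1" and "n1 \<noteq> n2"
  obtains u a where "norm u = 1" and "0 < a" and "n1 \<bullet> u = - a" and "n2 \<bullet> u = a"
proof -
  have unit: "n1 \<bullet> n1 = 1" "n2 \<bullet> n2 = 1" using assms(1,2) by (simp_all add: dot_square_norm)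
  define d where "d = n2 - n1"
  have "d \<noteq> 0" using assms(3) by (simp add: d_def)
  have n2d: "n2 \<bullet> d = (norm d)\<^sup>2 / 2" and n1d: "n1 \<bullet> d = - (norm d)\<^sup>2 / 2"
    using unit by (simp_all add: d_def power2_norm_eq_inner inner_diff_left inner_diff_right inner_commute)
  have "norm (sgn d) = 1" "0 < norm d / 2" using \<open>d \<noteq> 0\<close> by (simp_all add: norm_sgn)
  moreover have "n1 \<bullet> sgn d = - (norm d / 2)" "n2 \<bullet> sgn d = norm d / 2"
    unfolding sgn_div_norm inner_scaleR_right n2d n1d using \<open>d \<noteq> 0\<close>
    by (simp_all add: power2_eq_square field_simps)
  ultimately show thesis by (rule that)
qed

definition multivalued_points :: "('a \<times> 'b) set \<Rightarrow> 'a set" where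
  "multivalued_points G = {x. \<exists>y1 y2. (x, y1) \<in> G \<and> (x, y2) \<in> G \<and> y1 \<noteq> y2}"

lemma porous_at_rational_cball_projection:
  fixes G :: "('a::metric_space \<times> 'b::metric_space) set"
  assumes dense: "\<And>U. open U \<Longrightarrow> U \<noteq> {} \<Longrightarrow> \<exists>q\<in>D. q \<in> U"
    and "(x, y) \<in> G" and "0 < r0" and "0 < s"
    and porous: "porous_at s (fst ` (G \<inter> (UNIV \<times> ball y r0))) x"
  shows "\<exists>q r s'. q \<in> D \<and> r \<in> \<rat> \<and> s' \<in> \<rat> \<and> 0 < s' \<and> x \<in> fst ` (G \<inter> (UNIV \<times> cball q r)) \<and>
           porous_at s' (fst ` (G \<inter> (UNIV \<times> cball q r))) x"
proof -
  obtain q where "q \<in> D" "dist y q < r0 / 3"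
    using dense[of "ball y (r0 / 3)"] \<open>0 < r0\<close> by auto
  obtain r where "r \<in> \<rat>" "dist y q < r" "r < r0 / 3"
    using Rats_dense_in_real[OF \<open>dist y q < r0 / 3\<close>] by blast
  obtain s' where "s' \<in> \<rat>" "0 < s'" "s' < s" using Rats_dense_in_real[OF \<open>0 < s\<close>] by blast
  have "cball q r \<subseteq> ball y r0"
  proof
    fix z assume "z \<in> cball q r"
    then have "dist y z \<le> dist y q + r" using dist_triangle[of y z q] by simp
    then show "z \<in> ball y r0"
      unfolding mem_ball using \<open>dist y q < r\<close> \<open>r < r0 / 3\<close> zero_le_dist[of y q] by linarith
  qed
  then have "fst ` (G \<inter> (UNIV \<times> cball q r)) \<subseteq> fst ` (G \<inter> (UNIV \<times> ball y r0))" by blast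
  then have "porous_at s' (fst ` (G \<inter> (UNIV \<times> cball q r))) x"
    using porous_at_mono[OF porous] \<open>s' < s\<close> by simp
  moreover have "x \<in> fst ` (G \<inter> (UNIV \<times> cball q r))"
    using \<open>(x, y) \<in> G\<close> \<open>dist y q < r\<close> by (force simp: dist_commute)
  ultimately show ?thesis using \<open>q \<in> D\<close> \<open>r \<in> \<rat>\<close> \<open>s' \<in> \<rat>\<close> \<open>0 < s'\<close> by blast
qed

locale twisted_quasiconvex_cost =
  fixes c :: "'a::euclidean_space \<Rightarrow> 'a \<Rightarrow> real"
  assumes continuous_cost: "continuous_on UNIV (\<lambda>(x, y). c x y)"
    and cost_nonneg: "\<And>x y. c x y \<ge> 0"
    and unique_zero: "\<And>x. \<exists>!y. c x y = 0"
    and inf_cost_zero: "\<And>y. (INF x. c x y) = 0"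
    and strictly_quasiconvex_left: "\<And>y x x' t. x \<noteq> x' \<Longrightarrow> 0 < t \<Longrightarrow> t < 1 \<Longrightarrow>
                 c ((1 - t) *\<^sub>R x + t *\<^sub>R x') y < max (c x y) (c x' y)"
    and C1_sublevel: "\<And>l y. l > 0 \<Longrightarrow> C1_boundary (sublevel c y l)"
    and twist: "\<And>x y y' l. l > 0 \<Longrightarrow> c x y = l \<Longrightarrow> c x y' = l \<Longrightarrow>
                 outer_normal (sublevel c y l) x = outer_normal (sublevel c y' l) x \<Longrightarrow> y = y'"
begin

lemma continuous_on_cost_compose:
  assumes "continuous_on S f" and "continuous_on S g"
  shows "continuous_on S (\<lambda>z. c (f z) (g z))"
proof -
  have "continuous_on S (\<lambda>z. (\<lambda>(x, y). c x y) (f z, g z))"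
    by (rule continuous_on_compose2[OF continuous_cost]) (auto intro: continuous_on_Pair assms)
  then show ?thesis by simp
qed

lemma strictly_quasiconvex_cost: "strictly_quasiconvex (\<lambda>x. c x y)"
  unfolding strictly_quasiconvex_def using strictly_quasiconvex_left by blast

lemma sublevel_outer_normal:
  assumes "0 < c x y"
  shows "norm (outer_normal (sublevel c y (c x y)) x) = 1"
    and "0 < \<alpha> \<Longrightarrow> \<exists>r>0. \<forall>v. 0 < norm v \<longrightarrow> norm v < r \<longrightarrow>
           outer_normal (sublevel c y (c x y)) x \<bullet> v \<le> - \<alpha> * norm v \<longrightarrow> c (x + v) y < c x y"
proof -
  have "bdd_below (range (\<lambda>w. c w y))" using cost_nonneg by (intro bdd_belowI[of _ 0]) auto
  then obtain w where "c w y < c x y"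
    using cINF_less_iff[of UNIV "\<lambda>w. c w y" "c x y"] inf_cost_zero[of y] assms by auto
  note normal = strictly_quasiconvex_sublevel_outer_normal[OF strictly_quasiconvex_cost
      continuous_on_cost_compose[OF continuous_on_id continuous_on_const]
      C1_sublevel[OF assms, of y, unfolded sublevel_def] \<open>c w y < c x y\<close> refl]
  show "norm (outer_normal (sublevel c y (c x y)) x) = 1"
    using normal(1) by (simp add: sublevel_def)
  show "0 < \<alpha> \<Longrightarrow> \<exists>r>0. \<forall>v. 0 < norm v \<longrightarrow> norm v < r \<longrightarrow>
           outer_normal (sublevel c y (c x y)) x \<bullet> v \<le> - \<alpha> * norm v \<longrightarrow> c (x + v) y < c x y"
    using normal(2) by (simp add: sublevel_def)
qed

lemma cost_less_near_ray:
  assumes "0 < c x y" and "norm u = 1" and "0 < a"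
    and "outer_normal (sublevel c y (c x y)) x \<bullet> u \<le> - a"
  shows "\<exists>\<rho>1>0. \<forall>\<rho> x'. 0 < \<rho> \<longrightarrow> \<rho> < \<rho>1 \<longrightarrow> x' \<in> ball (x + (\<rho> / 2) *\<^sub>R u) (a / 4 * \<rho>) \<longrightarrow>
           c x' y < c x y"
proof -
  define n where "n = outer_normal (sublevel c y (c x y)) x"
  have "norm (- n) = 1" using sublevel_outer_normal(1)[OF assms(1)] by (simp add: n_def)
  have "a \<le> (- n) \<bullet> u" using assms(4) by (simp add: n_def)
  have "0 < a / 4" using assms(3) by simp
  from sublevel_outer_normal(2)[OF assms(1) this]
  obtain r where "0 < r"
    and r: "\<forall>v. 0 < norm v \<longrightarrow> norm v < r \<longrightarrow> n \<bullet> v \<le> - (a / 4) * norm v \<longrightarrow> c (x + v) y < c x y"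
    unfolding n_def by blast
  have "c x' y < c x y" if "0 < \<rho>" "\<rho> < r" "x' \<in> ball (x + (\<rho> / 2) *\<^sub>R u) (a / 4 * \<rho>)" for \<rho> x'
  proof -
    note cone = ball_along_ray_in_cone[OF \<open>norm (- n) = 1\<close> assms(2,3) \<open>a \<le> (- n) \<bullet> u\<close> that(1,3)]
    have "n \<bullet> (x' - x) \<le> - (a / 4) * norm (x' - x)" using cone(3) by simp
    then show ?thesis using r[rule_format, of "x' - x"] cone(1,2) \<open>\<rho> < r\<close> by simp
  qed
  then show ?thesis using \<open>0 < r\<close> by blast
qed

lemma cost_gap_near_target:
  assumes "compact P" and "\<And>p. p \<in> P \<Longrightarrow> c (x + p) y < c x y"
  shows "\<exists>r>0. \<forall>p\<in>P. \<forall>y'. dist y' y < r \<longrightarrow> c (x + p) y' < c x y'"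
proof -
  define W where "W = {q. c (x + snd q) (fst q) < c x (fst q)}"
  have "open W" unfolding W_def
    by (intro open_Collect_less continuous_on_cost_compose continuous_intros)
  moreover have "{y} \<times> P \<subseteq> W" using assms(2) by (simp add: W_def subset_iff)
  ultimately have "\<exists>Y. y \<in> Y \<and> open Y \<and> Y \<times> P \<subseteq> W"
    by (rule Elementary_Topology.tube_lemma[OF assms(1)])
  then obtain Y where "y \<in> Y" "open Y" "Y \<times> P \<subseteq> W" by blast
  obtain r where "0 < r" "ball y r \<subseteq> Y" by (rule openE[OF \<open>open Y\<close> \<open>y \<in> Y\<close>])
  have "(y', p) \<in> W" if "p \<in> P" "dist y' y < r" for p y'
  proof -
    have "y' \<in> Y" using that(2) \<open>ball y r \<subseteq> Y\<close> by (simp add: dist_commute subset_iff)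
    then show ?thesis using that(1) \<open>Y \<times> P \<subseteq> W\<close> by blast
  qed
  then show ?thesis using \<open>0 < r\<close> by (auto simp: W_def)
qed

lemma cost_increases_into_normal_cone:
  assumes "0 < c x y" and "0 < \<beta>"
  shows "\<exists>r>0. \<forall>v y'. v \<noteq> 0 \<longrightarrow> \<beta> * norm v \<le> outer_normal (sublevel c y (c x y)) x \<bullet> v \<longrightarrow>
           dist y' y < r \<longrightarrow> c x y' < c (x + v) y'"
proof -
  define n where "n = outer_normal (sublevel c y (c x y)) x"
  from sublevel_outer_normal(2)[OF assms]
  obtain \<delta> where "0 < \<delta>"
    and cone: "\<forall>v. 0 < norm v \<longrightarrow> norm v < \<delta> \<longrightarrow> n \<bullet> v \<le> - \<beta> * norm v \<longrightarrow> c (x + v) y < c x y"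
    unfolding n_def by blast
  define P where "P = {p. norm p = \<delta> / 2 \<and> n \<bullet> p \<le> - \<beta> * norm p}"
  have "compact P"
  proof -
    have "closed P" unfolding P_def
      by (intro closed_Collect_conj closed_Collect_eq closed_Collect_le continuous_intros)
    moreover have "bounded P" unfolding P_def by (rule boundedI[of _ "\<delta> / 2"]) auto
    ultimately show ?thesis by (simp add: compact_eq_bounded_closed)
  qed
  moreover have "c (x + p) y < c x y" if "p \<in> P" for p
    using cone that \<open>0 < \<delta>\<close> by (auto simp: P_def)
  ultimately obtain r where "0 < r" and gap: "\<forall>p\<in>P. \<forall>y'. dist y' y < r \<longrightarrow> c (x + p) y' < c x y'"
    using cost_gap_near_target by blast
  have "c x y' < c (x + v) y'" if "v \<noteq> 0" "\<beta> * norm v \<le> n \<bullet> v" "dist y' y < r" for v y'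
  proof -
    define k where "k = \<delta> / (2 * norm v)"
    have "0 < k" using \<open>v \<noteq> 0\<close> \<open>0 < \<delta>\<close> by (simp add: k_def)
    have "norm (- k *\<^sub>R v) = \<delta> / 2" using \<open>v \<noteq> 0\<close> \<open>0 < \<delta>\<close> by (simp add: k_def)
    moreover have "n \<bullet> (- k *\<^sub>R v) \<le> - \<beta> * norm (- k *\<^sub>R v)"
      using mult_left_mono[OF that(2), of k] \<open>0 < k\<close> by simp
    ultimately have "- k *\<^sub>R v \<in> P" by (simp add: P_def)
    then have "c (x + - k *\<^sub>R v) y' < c x y'" using gap that(3) by blast
    then have "c (x - k *\<^sub>R v) y' < c x y'" by simp
    \<comment> \<open>\<open>x\<close> lies strictly between \<open>x + v\<close> and \<open>x - k v \<in> P\<close>, where the cost is already below \<open>c x y'\<close>\<close>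
    moreover have "c x y' < max (c (x + v) y') (c (x - k *\<^sub>R v) y')"
      by (rule strictly_quasiconvex_between[OF strictly_quasiconvex_cost \<open>v \<noteq> 0\<close> \<open>0 < k\<close>])
    ultimately show ?thesis by simp
  qed
  then show ?thesis using \<open>0 < r\<close> unfolding n_def by blast
qed

lemma porous_at_cheaper_target:
  assumes mono: "inf_monotone_set c G" and "(x, y1) \<in> G" and "c x y2 < c x y1"
  shows "\<exists>r>0. \<exists>s>0. porous_at s (fst ` (G \<inter> (UNIV \<times> ball y2 r))) x"
proof -
  have "0 < c x y1" using assms(3) cost_nonneg[of x y2] by linarith
  define n where "n = outer_normal (sublevel c y1 (c x y1)) x"
  have "norm n = 1" using sublevel_outer_normal(1)[OF \<open>0 < c x y1\<close>] by (simp add: n_def)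
  then have "norm (- n) = 1" "outer_normal (sublevel c y1 (c x y1)) x \<bullet> (- n) \<le> - 1"
    by (simp_all add: n_def dot_square_norm)
  from cost_less_near_ray[OF \<open>0 < c x y1\<close> this(1) zero_less_one this(2)]
  obtain \<rho>1 where "0 < \<rho>1" and near: "\<forall>\<rho> x'. 0 < \<rho> \<longrightarrow> \<rho> < \<rho>1 \<longrightarrow>
      x' \<in> ball (x + (\<rho> / 2) *\<^sub>R - n) (1 / 4 * \<rho>) \<longrightarrow> c x' y1 < c x y1"
    by blast
  have "open {y. c x y < c x y1}"
    by (intro open_Collect_less continuous_on_cost_compose continuous_intros)
  moreover have "y2 \<in> {y. c x y < c x y1}" using assms(3) by simp
  ultimately obtain r where "0 < r" and r: "ball y2 r \<subseteq> {y. c x y < c x y1}"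
    by (rule openE)
  have "ball (x + (\<rho> / 2) *\<^sub>R - n) (1 / 4 * \<rho>) \<inter> fst ` (G \<inter> (UNIV \<times> ball y2 r)) = {}"
    if "0 < \<rho>" "\<rho> < \<rho>1" for \<rho>
  proof -
    have False if "x' \<in> ball (x + (\<rho> / 2) *\<^sub>R - n) (1 / 4 * \<rho>)" "(x', y') \<in> G" "y' \<in> ball y2 r"
      for x' y'
    proof -
      have "c x' y1 < c x y1" using near \<open>0 < \<rho>\<close> \<open>\<rho> < \<rho>1\<close> that(1) by blast
      moreover have "c x y' < c x y1" using r that(3) by blast
      moreover have "max (c x y1) (c x' y') \<le> max (c x y') (c x' y1)"
        using mono \<open>(x, y1) \<in> G\<close> that(2) unfolding inf_monotone_set_def by blast
      ultimately show False by (simp add: max_def split: if_splits)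
    qed
    then show ?thesis by force
  qed
  then have "porous_at (1 / 4) (fst ` (G \<inter> (UNIV \<times> ball y2 r))) x"
    using \<open>norm (- n) = 1\<close> \<open>0 < \<rho>1\<close> by (intro porous_at_ray[of "- n"]) auto
  then show ?thesis using \<open>0 < r\<close> by (intro exI[of _ r] conjI exI[of _ "1 / 4"]) auto
qed

lemma equal_cost_distinct_normals:
  assumes "y1 \<noteq> y2" and "c x y2 = c x y1"
  shows "0 < c x y1"
    and "outer_normal (sublevel c y1 (c x y1)) x \<noteq> outer_normal (sublevel c y2 (c x y1)) x"
proof -
  show "0 < c x y1"
  proof (rule ccontr)
    assume "\<not> 0 < c x y1"
    then have "c x y1 = 0" "c x y2 = 0" using cost_nonneg[of x y1] assms(2) by auto
    then show False using unique_zero[of x] assms(1) by blast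
  qed
  then show "outer_normal (sublevel c y1 (c x y1)) x \<noteq> outer_normal (sublevel c y2 (c x y1)) x"
    using twist[OF _ refl assms(2)] assms(1) by blast
qed

lemma porous_at_equally_costly_target:
  assumes mono: "inf_monotone_set c G" and "(x, y1) \<in> G" and "y1 \<noteq> y2" and "c x y2 = c x y1"
  shows "\<exists>r>0. \<exists>s>0. porous_at s (fst ` (G \<inter> (UNIV \<times> ball y2 r))) x"
proof -
  define l where "l = c x y1"
  have "0 < c x y1" "0 < c x y2" using equal_cost_distinct_normals(1)[OF assms(3,4)] assms(4) by simp_all
  define n1 where "n1 = outer_normal (sublevel c y1 l) x"
  define n2 where "n2 = outer_normal (sublevel c y2 l) x"
  have "norm n1 = 1" "norm n2 = 1"
    using sublevel_outer_normal(1)[OF \<open>0 < c x y1\<close>] sublevel_outer_normal(1)[OF \<open>0 < c x y2\<close>] assms(4)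
    by (simp_all add: n1_def n2_def l_def)
  have "n1 \<noteq> n2"
    using equal_cost_distinct_normals(2)[OF assms(3,4)] by (simp add: n1_def n2_def l_def)
  obtain u a where "norm u = 1" "0 < a" "n1 \<bullet> u = - a" "n2 \<bullet> u = a"
    using unit_vectors_bisector[OF \<open>norm n1 = 1\<close> \<open>norm n2 = 1\<close> \<open>n1 \<noteq> n2\<close>] by blast
  have "a \<le> 1" using Cauchy_Schwarz_ineq2[of n2 u] \<open>norm n2 = 1\<close> \<open>norm u = 1\<close> \<open>n2 \<bullet> u = a\<close> by simp
  from cost_less_near_ray[OF \<open>0 < c x y1\<close> \<open>norm u = 1\<close> \<open>0 < a\<close>] \<open>n1 \<bullet> u = - a\<close>
  obtain \<rho>1 where "0 < \<rho>1" and near: "\<forall>\<rho> x'. 0 < \<rho> \<longrightarrow> \<rho> < \<rho>1 \<longrightarrow>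
      x' \<in> ball (x + (\<rho> / 2) *\<^sub>R u) (a / 4 * \<rho>) \<longrightarrow> c x' y1 < l"
    unfolding n1_def l_def by auto
  have "0 < a / 4" using \<open>0 < a\<close> by simp
  from cost_increases_into_normal_cone[OF \<open>0 < c x y2\<close> this]
  obtain r where "0 < r" and increase: "\<forall>v y'. v \<noteq> 0 \<longrightarrow> a / 4 * norm v \<le> n2 \<bullet> v \<longrightarrow>
      dist y' y2 < r \<longrightarrow> c x y' < c (x + v) y'"
    unfolding n2_def assms(4) l_def by blast
  have "ball (x + (\<rho> / 2) *\<^sub>R u) (a / 4 * \<rho>) \<inter> fst ` (G \<inter> (UNIV \<times> ball y2 r)) = {}"
    if "0 < \<rho>" "\<rho> < \<rho>1" for \<rho>
  proof -
    have False if x': "x' \<in> ball (x + (\<rho> / 2) *\<^sub>R u) (a / 4 * \<rho>)" and "(x', y') \<in> G" "y' \<in> ball y2 r"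
      for x' y'
    proof -
      have "c x' y1 < l" using near \<open>0 < \<rho>\<close> \<open>\<rho> < \<rho>1\<close> x' by blast
      moreover have "max (c x y1) (c x' y') \<le> max (c x y') (c x' y1)"
        using mono \<open>(x, y1) \<in> G\<close> that(2) unfolding inf_monotone_set_def by blast
      ultimately have "c x' y' \<le> c x y'" by (simp add: l_def max_def split: if_splits)
      \<comment> \<open>yet \<open>x'\<close> lies in the outer normal cone of the \<open>y2\<close>-sublevel set, where the cost rises\<close>
      have "a \<le> n2 \<bullet> u" using \<open>n2 \<bullet> u = a\<close> by simp
      note cone = ball_along_ray_in_cone[OF \<open>norm n2 = 1\<close> \<open>norm u = 1\<close> \<open>0 < a\<close> this \<open>0 < \<rho>\<close> x']
      have "c x y' < c x' y'"
        using increase[rule_format, of "x' - x" y'] cone(1,3) \<open>y' \<in> ball y2 r\<close> by (simp add: dist_commute)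
      then show False using \<open>c x' y' \<le> c x y'\<close> by simp
    qed
    then show ?thesis by force
  qed
  moreover have "a / 4 \<le> 1 / 2" using \<open>a \<le> 1\<close> by simp
  ultimately have "porous_at (a / 4) (fst ` (G \<inter> (UNIV \<times> ball y2 r))) x"
    using \<open>norm u = 1\<close> \<open>0 < \<rho>1\<close> by (intro porous_at_ray[of u]) auto
  then show ?thesis using \<open>0 < r\<close> \<open>0 < a / 4\<close> by blast
qed

lemma porous_at_multivalued_point:
  assumes "inf_monotone_set c G" and "x \<in> multivalued_points G"
  shows "\<exists>y r s. (x, y) \<in> G \<and> 0 < r \<and> 0 < s \<and> porous_at s (fst ` (G \<inter> (UNIV \<times> ball y r))) x"
proof -
  obtain y1 y2 where "(x, y1) \<in> G" "(x, y2) \<in> G" "y1 \<noteq> y2"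
    using assms(2) by (auto simp: multivalued_points_def)
  consider "c x y2 < c x y1" | "c x y1 < c x y2" | "c x y2 = c x y1" by linarith
  then show ?thesis
  proof cases
    case 1
    then show ?thesis
      using porous_at_cheaper_target[OF assms(1) \<open>(x, y1) \<in> G\<close>] \<open>(x, y2) \<in> G\<close> by blast
  next
    case 2
    then show ?thesis
      using porous_at_cheaper_target[OF assms(1) \<open>(x, y2) \<in> G\<close>] \<open>(x, y1) \<in> G\<close> by blast
  next
    case 3
    then show ?thesis
      using porous_at_equally_costly_target[OF assms(1) \<open>(x, y1) \<in> G\<close> \<open>y1 \<noteq> y2\<close>] \<open>(x, y2) \<in> G\<close>
      by blast
  qed
qed

lemma negligible_multivalued_points:
  assumes "inf_monotone_set c G"
    and proj: "\<And>F. closed F \<Longrightarrow> fst ` (G \<inter> (UNIV \<times> F)) \<in> sets lebesgue"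
  shows "negligible (multivalued_points G)"
proof -
  obtain D :: "'a set" where "countable D" and dense: "\<And>U. open U \<Longrightarrow> U \<noteq> {} \<Longrightarrow> \<exists>y\<in>D. y \<in> U"
    using countable_dense_exists by blast
  define E where "E q r = fst ` (G \<inter> (UNIV \<times> cball q r))" for q r
  define porous_parts where "porous_parts =
    (\<lambda>(q, r, s). {x \<in> E q r. porous_at s (E q r) x}) ` (D \<times> \<rat> \<times> {s \<in> \<rat>. 0 < s})"
  have "countable porous_parts"
    unfolding porous_parts_def using \<open>countable D\<close>
    by (intro countable_image countable_SIGMA countable_rat countable_subset[OF _ countable_rat]) auto
  moreover have "negligible S" if "S \<in> porous_parts" for S
    using that negligible_porous_points[OF proj] by (auto simp: porous_parts_def E_def)
  moreover have "multivalued_points G \<subseteq> \<Union>porous_parts"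
  proof
    fix x assume "x \<in> multivalued_points G"
    then obtain y r0 s where "(x, y) \<in> G" "0 < r0" "0 < s"
      and "porous_at s (fst ` (G \<inter> (UNIV \<times> ball y r0))) x"
      using porous_at_multivalued_point[OF assms(1)] by blast
    from porous_at_rational_cball_projection[OF dense this]
    obtain q r s' where "q \<in> D" "r \<in> \<rat>" "s' \<in> \<rat>" "0 < s'" "x \<in> E q r" "porous_at s' (E q r) x"
      unfolding E_def by blast
    moreover have "{x \<in> E q r. porous_at s' (E q r) x} \<in> porous_parts"
      unfolding porous_parts_def using \<open>q \<in> D\<close> \<open>r \<in> \<rat>\<close> \<open>s' \<in> \<rat>\<close> \<open>0 < s'\<close>
      by (intro image_eqI[of _ _ "(q, r, s')"]) auto
    ultimately show "x \<in> \<Union>porous_parts" by blast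
  qed
  ultimately show ?thesis by (meson negligible_countable_Union negligible_subset)
qed
end

section \<open>Borel selections on sigma-compact sets\<close>

lemma finite_measure_inner_compact:
  fixes M :: "'a::{second_countable_topology, complete_space} measure"
  assumes "sets M = sets borel" and "finite_measure M" and "B \<in> sets borel" and "t < measure M B"
  shows "\<exists>K. compact K \<and> K \<subseteq> B \<and> t < measure M K"
proof (cases "t < 0")
  case True
  then show ?thesis by (intro exI[of _ "{}"]) auto
next
  case False
  interpret finite_measure M by (rule assms(2))
  have "ennreal t < emeasure M B" using assms(4) False by (simp add: emeasure_eq_measure ennreal_less_iff)
  also have "emeasure M B = (SUP K \<in> {K. K \<subseteq> B \<and> compact K}. emeasure M K)"
    by (rule inner_regular[OF assms(1) _ assms(3)]) simp
  finally obtain K where "K \<subseteq> B" "compact K" "ennreal t < emeasure M K" by (auto simp: less_SUP_iff)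
  then show ?thesis using False by (auto simp: emeasure_eq_measure ennreal_less_iff)
qed

lemma borel_inner_sigma_compact:
  fixes M :: "'a::{second_countable_topology, complete_space} measure"
  assumes "sets M = sets borel" and "finite_measure M" and "B \<in> sets borel"
  obtains K :: "nat \<Rightarrow> 'a set"
  where "\<And>n. compact (K n)" and "\<And>n. K n \<subseteq> B" and "B - (\<Union>n. K n) \<in> null_sets M"
proof -
  interpret finite_measure M by (rule assms(2))
  have "\<forall>n. \<exists>K. compact K \<and> K \<subseteq> B \<and> measure M B - 1 / Suc n < measure M K"
    using finite_measure_inner_compact[OF assms] by simp
  then obtain K where "\<forall>n. compact (K n) \<and> K n \<subseteq> B \<and> measure M B - 1 / Suc n < measure M (K n)"
    by (rule choice[THEN exE])
  then have K: "\<And>n. compact (K n)" "\<And>n. K n \<subseteq> B"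
    and large: "\<And>n. measure M B - 1 / Suc n < measure M (K n)"
    by blast+
  have "B \<in> sets M" "\<And>n. K n \<in> sets M" using assms(1,3) K by (auto intro: borel_compact)
  have bound: "measure M (B - (\<Union>n. K n)) \<le> 1 / Suc n" for n
  proof -
    have "measure M (B - (\<Union>n. K n)) \<le> measure M (B - K n)"
      using \<open>B \<in> sets M\<close> \<open>\<And>n. K n \<in> sets M\<close> by (intro finite_measure_mono) auto
    also have "\<dots> = measure M B - measure M (K n)"
      using \<open>B \<in> sets M\<close> \<open>K n \<in> sets M\<close> K(2) by (intro finite_measure_Diff) auto
    finally show ?thesis using large[of n] by simp
  qed
  have "(\<lambda>n. 1 / real (Suc n)) \<longlonglongrightarrow> 0"
    using LIMSEQ_inverse_real_of_nat by (simp add: inverse_eq_divide)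
  then have "measure M (B - (\<Union>n. K n)) \<le> 0"
    by (rule LIMSEQ_le_const) (use bound in blast)
  then have "measure M (B - (\<Union>n. K n)) = 0"
    using measure_nonneg[of M "B - (\<Union>n. K n)"] by linarith
  moreover have "B - (\<Union>n. K n) \<in> sets M" using \<open>B \<in> sets M\<close> \<open>\<And>n. K n \<in> sets M\<close> by auto
  ultimately have "B - (\<Union>n. K n) \<in> null_sets M" by (simp add: emeasure_eq_measure null_setsI)
  then show thesis using K that by blast
qed

lemma sigma_compact_projection_borel:
  fixes K :: "nat \<Rightarrow> ('a::metric_space \<times> 'b::metric_space) set"
  assumes "\<And>n. compact (K n)" and "closed F"
  shows "fst ` ((\<Union>n. K n) \<inter> (UNIV \<times> F)) \<in> sets borel"
proof -
  have "fst ` ((\<Union>n. K n) \<inter> (UNIV \<times> F)) = (\<Union>n. fst ` (K n \<inter> (UNIV \<times> F)))" by blast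
  moreover have "fst ` (K n \<inter> (UNIV \<times> F)) \<in> sets borel" for n
    using assms
    by (intro borel_compact compact_continuous_image continuous_intros compact_Int_closed closed_Times) auto
  ultimately show ?thesis by (simp add: sets.countable_UN)
qed

definition graph_selection :: "('a \<times> 'b::zero) set \<Rightarrow> 'a set \<Rightarrow> 'a \<Rightarrow> 'b" where
  "graph_selection G N x = (if x \<in> fst ` G - N then THE y. (x, y) \<in> G else 0)"

lemma graph_selection_eq:
  assumes "multivalued_points G \<subseteq> N" and "(x, y) \<in> G" and "x \<notin> N"
  shows "graph_selection G N x = y"
proof -
  have "y' = y" if "(x, y') \<in> G" for y'
    using that assms unfolding multivalued_points_def by blast
  then have "(THE y. (x, y) \<in> G) = y" using assms(2) by (rule the_equality[rotated])
  moreover have "x \<in> fst ` G - N" using assms(2,3) by force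
  ultimately show ?thesis by (simp add: graph_selection_def)
qed

lemma vimage_graph_selection:
  assumes "multivalued_points G \<subseteq> N"
  shows "graph_selection G N -` F =
    (fst ` (G \<inter> (UNIV \<times> F)) - N) \<union> (if 0 \<in> F then - (fst ` G - N) else {})"
proof (rule set_eqI)
  fix x
  show "x \<in> graph_selection G N -` F \<longleftrightarrow>
    x \<in> (fst ` (G \<inter> (UNIV \<times> F)) - N) \<union> (if 0 \<in> F then - (fst ` G - N) else {})"
  proof (cases "x \<in> fst ` G - N")
    case True
    then obtain y where xy: "(x, y) \<in> G" "x \<notin> N" by auto
    have "x \<in> fst ` (G \<inter> (UNIV \<times> F)) \<longleftrightarrow> y \<in> F"
    proof
      assume "x \<in> fst ` (G \<inter> (UNIV \<times> F))"
      then obtain y' where "(x, y') \<in> G" "y' \<in> F" by auto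
      then show "y \<in> F"
        using graph_selection_eq[OF assms \<open>(x, y') \<in> G\<close> \<open>x \<notin> N\<close>] graph_selection_eq[OF assms xy] by simp
    next
      assume "y \<in> F"
      then show "x \<in> fst ` (G \<inter> (UNIV \<times> F))" using xy(1) by force
    qed
    then show ?thesis using True xy(2) graph_selection_eq[OF assms xy] by simp
  next
    case False
    then have "graph_selection G N x = 0" unfolding graph_selection_def by (rule if_not_P)
    moreover have "x \<notin> fst ` (G \<inter> (UNIV \<times> F)) - N" using False by blast
    ultimately show ?thesis using False by simp
  qed
qed

lemma borel_measurable_graph_selection:
  fixes G :: "('a::euclidean_space \<times> 'b::euclidean_space) set"
  assumes proj: "\<And>F. closed F \<Longrightarrow> fst ` (G \<inter> (UNIV \<times> F)) \<in> sets borel"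
    and "N \<in> sets borel" and "multivalued_points G \<subseteq> N"
  shows "graph_selection G N \<in> borel_measurable borel"
proof (rule borel_measurableI)
  have "fst ` G - N \<in> sets borel" using proj[of UNIV] assms(2) by simp
  from borel_comp[OF this] have "(if 0 \<in> F then - (fst ` G - N) else {}) \<in> sets borel" for F
    by simp
  then have closed_vimage: "graph_selection G N -` F \<in> sets borel" if "closed F" for F
    unfolding vimage_graph_selection[OF assms(3)] by (rule sets.Un[OF sets.Diff[OF proj[OF that] assms(2)]])
  fix S :: "'b set" assume "open S"
  have "graph_selection G N -` S = - graph_selection G N -` (- S)" by auto
  then show "graph_selection G N -` S \<inter> space borel \<in> sets borel"
    using borel_comp[OF closed_vimage[OF closed_Compl[OF \<open>open S\<close>]]] by simp
qed

lemma measurable_fst_snd_borel: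
  fixes M :: "('a::metric_space \<times> 'b::metric_space) measure"
  assumes "sets M = sets borel"
  shows "fst \<in> measurable M borel" and "snd \<in> measurable M borel"
  using borel_measurable_continuous_onI[OF continuous_on_fst[OF continuous_on_id]]
    borel_measurable_continuous_onI[OF continuous_on_snd[OF continuous_on_id]]
  by (simp_all add: measurable_cong_sets[OF assms refl])

lemma distr_fst_eq_distr_snd_of_AE_graph:
  fixes \<gamma> :: "('a::euclidean_space \<times> 'b::euclidean_space) measure"
  assumes "sets \<gamma> = sets borel" and "T \<in> borel_measurable borel" and "AE p in \<gamma>. snd p = T (fst p)"
  shows "distr (distr \<gamma> borel fst) borel T = distr \<gamma> borel snd"
proof -
  note fst = measurable_fst_snd_borel(1)[OF assms(1)] and snd = measurable_fst_snd_borel(2)[OF assms(1)]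
  have "distr (distr \<gamma> borel fst) borel T = distr \<gamma> borel (T \<circ> fst)"
    using assms(2) fst by (intro distr_distr) auto
  also have "\<dots> = distr \<gamma> borel snd"
    using assms(2,3) fst snd by (intro distr_cong_AE) (auto elim: AE_mp)
  finally show ?thesis .
qed

lemma inf_monotone_plan_sigma_compact:
  fixes \<gamma> :: "('a::euclidean_space \<times> 'a) measure"
  assumes "inf_monotone_plan c \<gamma>" and "sets \<gamma> = sets borel" and "finite_measure \<gamma>"
  obtains K :: "nat \<Rightarrow> ('a \<times> 'a) set" where "\<And>n. compact (K n)"
    and "inf_monotone_set c (\<Union>n. K n)" and "UNIV - (\<Union>n. K n) \<in> null_sets \<gamma>"
proof -
  obtain \<Gamma> N where "inf_monotone_set c \<Gamma>" "N \<in> null_sets \<gamma>" "UNIV - \<Gamma> \<subseteq> N"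
    using assms(1) unfolding inf_monotone_plan_def by (elim exE bexE conjE)
  have "N \<in> sets borel" using null_setsD2[OF \<open>N \<in> null_sets \<gamma>\<close>] assms(2) by simp
  then have "UNIV - N \<in> sets borel" using borel_comp by (simp add: Compl_eq_Diff_UNIV)
  obtain K :: "nat \<Rightarrow> ('a \<times> 'a) set" where K: "\<And>n. compact (K n)" "\<And>n. K n \<subseteq> UNIV - N"
    and "(UNIV - N) - (\<Union>n. K n) \<in> null_sets \<gamma>"
    using borel_inner_sigma_compact[OF assms(2,3) \<open>UNIV - N \<in> sets borel\<close>] by metis
  have "(\<Union>n. K n) \<subseteq> \<Gamma>" using K(2) \<open>UNIV - \<Gamma> \<subseteq> N\<close> by auto
  then have "inf_monotone_set c (\<Union>n. K n)"
    using \<open>inf_monotone_set c \<Gamma>\<close> unfolding inf_monotone_set_def by (meson subsetD)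
  have "(\<Union>n. K n) \<in> sets borel" using borel_compact[OF K(1)] by (simp add: sets.countable_UN)
  then have "UNIV - (\<Union>n. K n) \<in> sets \<gamma>" using assms(2) by auto
  moreover have "UNIV - (\<Union>n. K n) \<subseteq> N \<union> ((UNIV - N) - (\<Union>n. K n))" by auto
  ultimately have "UNIV - (\<Union>n. K n) \<in> null_sets \<gamma>"
    using null_sets_subset[OF null_sets.Un[OF \<open>N \<in> null_sets \<gamma>\<close> \<open>(UNIV - N) - (\<Union>n. K n) \<in> null_sets \<gamma>\<close>]]
    by blast
  then show thesis using that K(1) \<open>inf_monotone_set c (\<Union>n. K n)\<close> by blast
qed

lemma transport_plan_induced_by_map:
  fixes \<mu> \<nu> :: "'a::euclidean_space measure" and K :: "nat \<Rightarrow> ('a \<times> 'a) set"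
  assumes plan: "\<gamma> \<in> transport_plans \<mu> \<nu>" and mu_ac: "absolutely_continuous lborel \<mu>"
    and K: "\<And>n. compact (K n)" and "UNIV - (\<Union>n. K n) \<in> null_sets \<gamma>"
    and "negligible (multivalued_points (\<Union>n. K n))"
  shows "\<exists>T. T \<in> borel_measurable borel \<and> (AE p in \<gamma>. snd p = T (fst p)) \<and> distr \<mu> borel T = \<nu>"
proof -
  define G where "G = (\<Union>n. K n)"
  have "sets \<gamma> = sets borel" "distr \<gamma> borel fst = \<mu>" "distr \<gamma> borel snd = \<nu>"
    using plan unfolding transport_plans_def by blast+
  obtain N0 where "N0 \<in> null_sets lborel" "multivalued_points G \<subseteq> N0"
    using assms(5) unfolding G_def negligible_iff_null_sets null_sets_completion_iff2 by blast
  have "N0 \<in> sets borel" using null_setsD2[OF \<open>N0 \<in> null_sets lborel\<close>] by simp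
  have proj: "fst ` (G \<inter> (UNIV \<times> F)) \<in> sets borel" if "closed F" for F
    using sigma_compact_projection_borel[OF K that] by (simp add: G_def)
  define T where "T = graph_selection G N0"
  have "T \<in> borel_measurable borel"
    unfolding T_def by (rule borel_measurable_graph_selection[OF proj \<open>N0 \<in> sets borel\<close> \<open>multivalued_points G \<subseteq> N0\<close>])
  have graph: "T x = y" if "(x, y) \<in> G" "x \<notin> N0" for x y
    unfolding T_def using graph_selection_eq[OF \<open>multivalued_points G \<subseteq> N0\<close> that] .
  have "N0 \<in> null_sets \<mu>" using mu_ac \<open>N0 \<in> null_sets lborel\<close> by (auto simp: absolutely_continuous_def)
  then have "AE x in distr \<gamma> borel fst. x \<notin> N0" using \<open>distr \<gamma> borel fst = \<mu>\<close> by (simp add: AE_not_in)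
  moreover have "{x \<in> space borel. x \<notin> N0} \<in> sets borel" using \<open>N0 \<in> sets borel\<close> by auto
  ultimately have "AE p in \<gamma>. fst p \<notin> N0"
    by (simp add: AE_distr_iff[OF measurable_fst_snd_borel(1)[OF \<open>sets \<gamma> = sets borel\<close>]])
  moreover have "AE p in \<gamma>. p \<in> G"
    using AE_not_in[OF assms(4)] by (simp add: G_def)
  ultimately have graph_AE: "AE p in \<gamma>. snd p = T (fst p)"
    by eventually_elim (metis graph prod.collapse)
  moreover have "distr \<mu> borel T = \<nu>"
    using distr_fst_eq_distr_snd_of_AE_graph[OF \<open>sets \<gamma> = sets borel\<close> \<open>T \<in> borel_measurable borel\<close> graph_AE]
      \<open>distr \<gamma> borel fst = \<mu>\<close> \<open>distr \<gamma> borel snd = \<nu>\<close> by simp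
  ultimately show ?thesis using \<open>T \<in> borel_measurable borel\<close> by blast
qed

theorem theorem2p19:
  fixes \<mu> \<nu> :: "'a::euclidean_space measure"
    and c :: "'a \<Rightarrow> 'a \<Rightarrow> real"
    and \<gamma> :: "('a \<times> 'a) measure"
  assumes mu_borel: "sets \<mu> = sets borel" and mu_prob: "prob_space \<mu>"
    and nu_borel: "sets \<nu> = sets borel" and nu_prob: "prob_space \<nu>"
    and mu_supp: "compact (measure_support \<mu>)"
    and nu_supp: "compact (measure_support \<nu>)"
    and mu_ac: "absolutely_continuous lborel \<mu>"
    and c_cont: "continuous_on UNIV (\<lambda>(x, y). c x y)"
    and c_nonneg: "\<And>x y. c x y \<ge> 0"
    and c_i1: "\<And>x. \<exists>!y. c x y = 0"
    and c_i2: "\<And>y. (INF x. c x y) = 0"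
    and c_ii: "\<And>y x x' t. x \<noteq> x' \<Longrightarrow> 0 < t \<Longrightarrow> t < 1 \<Longrightarrow>
                 c ((1 - t) *\<^sub>R x + t *\<^sub>R x') y < max (c x y) (c x' y)"
    and c_iii: "\<And>l y. l > 0 \<Longrightarrow> C1_boundary (sublevel c y l)"
    and c_iv: "\<And>x y y' l. l > 0 \<Longrightarrow> c x y = l \<Longrightarrow> c x y' = l \<Longrightarrow>
                 outer_normal (sublevel c y l) x = outer_normal (sublevel c y' l) x \<Longrightarrow> y = y'"
    and plan: "\<gamma> \<in> transport_plans \<mu> \<nu>"
    and mono: "inf_monotone_plan c \<gamma>"
  shows "\<exists>T. T \<in> borel_measurable borel \<and>
             (AE p in \<gamma>. snd p = T (fst p)) \<and>
             distr \<mu> borel T = \<nu>"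
proof -
  interpret twisted_quasiconvex_cost c
    by unfold_locales (fact c_cont c_nonneg c_i1 c_i2 c_ii c_iii c_iv)+
  have "sets \<gamma> = sets borel" and "finite_measure \<gamma>"
    using plan prob_space.finite_measure by (auto simp: transport_plans_def)
  then obtain K :: "nat \<Rightarrow> ('a \<times> 'a) set" where K: "\<And>n. compact (K n)"
    and "inf_monotone_set c (\<Union>n. K n)" and "UNIV - (\<Union>n. K n) \<in> null_sets \<gamma>"
    using inf_monotone_plan_sigma_compact[OF mono] by metis
  have "fst ` ((\<Union>n. K n) \<inter> (UNIV \<times> F)) \<in> sets lebesgue" if "closed F" for F
    using sigma_compact_projection_borel[OF K that] sets_completionI_sets[of _ lborel] by simp
  then have "negligible (multivalued_points (\<Union>n. K n))"
    by (rule negligible_multivalued_points[OF \<open>inf_monotone_set c (\<Union>n. K n)\<close>])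
  then show ?thesis
    using transport_plan_induced_by_map[OF plan mu_ac K \<open>UNIV - (\<Union>n. K n) \<in> null_sets \<gamma>\<close>] by blast
qed

end
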